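(* Let $\varphi,\psi\in G$ satisfy $\lim_{t\to 0+}\psi(t)/\varphi(t)=0$, and let $E$ be a symmetric space on $[0,1]$ whose fundamental function is $\varphi$. Then $E\subset M(\tilde\psi)$ and the identity inclusion operator $I:E\to M(\tilde\psi)$ is disjointly strictly singular.
   Context: All functions are Lebesgue measurable on $[0,1]$, $\mu$ is Lebesgue measure, and $x^*$ denotes the decreasing left-continuous rearrangement of $|x|$. A symmetric space (SS) on $[0,1]$ is a Banach space $E$ of measurable functions on $[0,1]$ such that: (1) if $y\in E$ and $|x(t)|\le |y(t)|$ then $x\in E$ and $\|x\|\le\|y\|$; (2) if $y\in E$ and $x,y$ are equimeasurable (i.e. $\mu\{|x|>\tau\}=\mu\{|y|>\tau\}$ for all $\tau>0$) then $x\in E$ and $\|x\|=\|y\|$. The fundamental function of $E$ is $f_E(t)=\|\chi_{(0,t)}\|_E$. $G$ denotes the class of all positive increasing concave functions on $(0,1]$. For $\psi\in G$ put $\tilde\psi(t)=t/\psi(t)$; the Marcinkiewicz space $M(\tilde\psi)$ consists of all measurable $x$ with $\|x\|_{M(\tilde\psi)}=\sup_{0<t\le1}\frac{1}{\tilde\psi(t)}\int_0^t x^*(s)\,ds<\infty$. A bounded linear operator $T$ from a Banach lattice $X$ into a Banach space $Y$ is disjointly strictly singular (DSS) if there is no sequence of nonzero pairwise disjoint elements $x_n\in X$ such that the restriction of $T$ to their closed linear span $[x_n]$ is an isomorphism (onto its image). *)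

theory Defs
  imports "HOL-Analysis.Analysis"
begin

abbreviation mu01 :: "real measure" where
  "mu01 \<equiv> lebesgue_on {0..1}"

definition distr_fun :: "(real \<Rightarrow> real) \<Rightarrow> real \<Rightarrow> ennreal" where
  "distr_fun x \<tau> = emeasure mu01 {t \<in> {0..1}. \<bar>x t\<bar> > \<tau>}"

definition equimeasurable :: "(real \<Rightarrow> real) \<Rightarrow> (real \<Rightarrow> real) \<Rightarrow> bool" where
  "equimeasurable x y \<longleftrightarrow> (\<forall>\<tau>>0. distr_fun x \<tau> = distr_fun y \<tau>)"

definition rearr :: "(real \<Rightarrow> real) \<Rightarrow> real \<Rightarrow> real" where
  "rearr x s = Inf {\<tau>. \<tau> \<ge> 0 \<and> distr_fun x \<tau> < ennreal s}"

text \<open>Symmetric space on [0,1]: a set S of measurable functions with a norm N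
  (elements identified when equal a.e.), forming a Banach space, an ideal,
  and rearrangement invariant.\<close>
definition symmetric_space :: "(real \<Rightarrow> real) set \<Rightarrow> ((real \<Rightarrow> real) \<Rightarrow> real) \<Rightarrow> bool" where
  "symmetric_space S N \<longleftrightarrow>
     S \<subseteq> borel_measurable mu01 \<and>
     (\<lambda>t. 0) \<in> S \<and>
     (\<forall>x\<in>S. \<forall>y\<in>S. (\<lambda>t. x t + y t) \<in> S) \<and>
     (\<forall>x\<in>S. \<forall>c. (\<lambda>t. c * x t) \<in> S) \<and>
     (\<forall>x\<in>S. N x \<ge> 0) \<and>
     (\<forall>x\<in>S. N x = 0 \<longleftrightarrow> (AE t in mu01. x t = 0)) \<and>
     (\<forall>x\<in>S. \<forall>y\<in>S. N (\<lambda>t. x t + y t) \<le> N x + N y) \<and>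
     (\<forall>x\<in>S. \<forall>c. N (\<lambda>t. c * x t) = \<bar>c\<bar> * N x) \<and>
     (\<forall>u :: nat \<Rightarrow> real \<Rightarrow> real. (\<forall>n. u n \<in> S) \<longrightarrow>
        (\<forall>e>0. \<exists>K. \<forall>m\<ge>K. \<forall>n\<ge>K. N (\<lambda>t. u m t - u n t) < e) \<longrightarrow>
        (\<exists>x\<in>S. (\<lambda>n. N (\<lambda>t. u n t - x t)) \<longlonglongrightarrow> 0)) \<and>
     (\<forall>x y. y \<in> S \<longrightarrow> x \<in> borel_measurable mu01 \<longrightarrow>
        (AE t in mu01. \<bar>x t\<bar> \<le> \<bar>y t\<bar>) \<longrightarrow> x \<in> S \<and> N x \<le> N y) \<and>
     (\<forall>x y. y \<in> S \<longrightarrow> x \<in> borel_measurable mu01 \<longrightarrow>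
        equimeasurable x y \<longrightarrow> x \<in> S \<and> N x = N y)"

definition fundamental_function :: "((real \<Rightarrow> real) \<Rightarrow> real) \<Rightarrow> real \<Rightarrow> real" where
  "fundamental_function N t = N (indicator {0<..<t})"

definition classG :: "(real \<Rightarrow> real) \<Rightarrow> bool" where
  "classG \<phi> \<longleftrightarrow> (\<forall>t\<in>{0<..1}. \<phi> t > 0) \<and> mono_on {0<..1} \<phi> \<and> concave_on {0<..1} \<phi>"

definition tilde :: "(real \<Rightarrow> real) \<Rightarrow> real \<Rightarrow> real" where
  "tilde \<psi> t = t / \<psi> t"

text \<open>Marcinkiewicz functional (possibly infinite):
  for the weight w (w = tilde psi gives M(tilde psi)):
  sup over 0<t<=1 of (1/w t) * integral_0^t x*(s) ds.\<close>
definition marc_enorm :: "(real \<Rightarrow> real) \<Rightarrow> (real \<Rightarrow> real) \<Rightarrow> ennreal" where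
  "marc_enorm w x = (SUP t\<in>{0<..1}. ennreal (1 / w t) *
        (\<integral>\<^sup>+ s\<in>{0<..<t}. ennreal (rearr x s) \<partial>lborel))"

definition marc_space :: "(real \<Rightarrow> real) \<Rightarrow> (real \<Rightarrow> real) set" where
  "marc_space \<psi> = {x \<in> borel_measurable mu01. marc_enorm \<psi> x < \<infinity>}"

definition marc_norm :: "(real \<Rightarrow> real) \<Rightarrow> (real \<Rightarrow> real) \<Rightarrow> real" where
  "marc_norm \<psi> x = enn2real (marc_enorm \<psi> x)"

definition pairwise_disjoint_seq :: "(nat \<Rightarrow> real \<Rightarrow> real) \<Rightarrow> bool" where
  "pairwise_disjoint_seq u \<longleftrightarrow> (\<forall>m n. m \<noteq> n \<longrightarrow> (AE t in mu01. u m t * u n t = 0))"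

definition closed_span :: "(real \<Rightarrow> real) set \<Rightarrow> ((real \<Rightarrow> real) \<Rightarrow> real) \<Rightarrow> (nat \<Rightarrow> real \<Rightarrow> real)
    \<Rightarrow> (real \<Rightarrow> real) set" where
  "closed_span S N u = {x \<in> S. \<exists>v :: nat \<Rightarrow> real \<Rightarrow> real.
      (\<forall>k. \<exists>n c. v k = (\<lambda>t. \<Sum>i<n. c i * u i t)) \<and>
      (\<lambda>k. N (\<lambda>t. v k t - x t)) \<longlonglongrightarrow> 0}"

definition inclusion_DSS :: "(real \<Rightarrow> real) set \<Rightarrow> ((real \<Rightarrow> real) \<Rightarrow> real) \<Rightarrow> (real \<Rightarrow> real) \<Rightarrow> bool" where
  "inclusion_DSS S N \<psi> \<longleftrightarrow>
     \<not> (\<exists>u c. (\<forall>n. u n \<in> S \<and> \<not> (AE t in mu01. u n t = 0)) \<and> pairwise_disjoint_seq u \<and>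
          c > 0 \<and> (\<forall>x\<in>closed_span S N u. c * N x \<le> marc_norm \<psi> x))"

end

theory Submission
  imports Defs
begin

text \<open>
  The key estimate is \<open>\<integral>\<^sub>0\<^sup>t x\<^sup>* \<le> t \<parallel>x\<parallel>\<^sub>E / \<phi>(t)\<close>. For a decreasing step function \<open>g\<close>
  supported in \<open>(0, t)\<close>, the \<open>n\<close> rotations of \<open>g\<close> by multiples of \<open>t/n\<close> are equimeasurable
  with \<open>g\<close>, and their sum is at least \<open>(n/t) \<integral> g - O(1)\<close> on \<open>(0, t)\<close>; comparing norms and
  letting \<open>n \<rightarrow> \<infinity>\<close> gives \<open>\<integral> g \<le> t \<parallel>g\<parallel>\<^sub>E / \<phi>(t)\<close>. Applied to step functions approximating
  \<open>x\<^sup>*\<close> from below, which are dominated by \<open>x\<close> up to rearrangement, this gives the estimate.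

  If the support of \<open>x\<close> has measure \<open>\<delta>\<close>, then \<open>x\<^sup>*\<close> vanishes beyond \<open>\<delta>\<close>, and by concavity
  \<open>\<psi>(t)/t \<le> 2 \<psi>(\<delta>)/\<delta>\<close> for \<open>t > \<delta>\<close>; hence
  \<open>\<parallel>x\<parallel>\<^bsub>M(\<psi>\<^sup>~)\<^esub> \<le> 2 sup\<^bsub>s \<le> \<delta>\<^esub> (\<psi>(s)/\<phi>(s)) \<parallel>x\<parallel>\<^sub>E\<close>. With \<open>\<delta> = 1\<close> this is the embedding.
  Disjoint elements have supports whose measures sum to at most \<open>1\<close>, so one of them has small
  support, and its two norms have ratio at most \<open>2 sup\<^bsub>s \<le> \<delta>\<^esub> \<psi>(s)/\<phi>(s)\<close>, which is arbitrarily small: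
  the inclusion is not an isomorphism on the span of any disjoint sequence.
\<close>

lemma sets_mu01I: "A \<in> sets borel \<Longrightarrow> A \<subseteq> {0..1} \<Longrightarrow> A \<in> sets mu01"
  unfolding sets_restrict_space
  by (metis image_eqI inf.absorb2 sets_completionI_sets sets_lborel)

lemma emeasure_mu01: "A \<in> sets borel \<Longrightarrow> A \<subseteq> {0..1} \<Longrightarrow> emeasure mu01 A = emeasure lborel A"
  by (subst emeasure_restrict_space) auto

lemma sets_mu01_subset: "A \<in> sets mu01 \<Longrightarrow> A \<subseteq> {0..1}"
  using sets.sets_into_space[of A mu01] by simp

lemma emeasure_mu01_le_1: "emeasure mu01 A \<le> 1"
proof -
  have "emeasure mu01 A \<le> emeasure mu01 (space mu01)" by (rule emeasure_space)
  also have "\<dots> = emeasure lborel {0..1::real}" by (simp add: emeasure_mu01)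
  finally show ?thesis by simp
qed

lemma Ioo_in_sets_mu01: "a \<le> 1 \<Longrightarrow> {0<..<a} \<in> sets mu01"
  by (rule sets_mu01I) auto

lemma emeasure_mu01_Ioo: "0 \<le> a \<Longrightarrow> a \<le> 1 \<Longrightarrow> emeasure mu01 {0<..<a} = ennreal a"
  by (subst emeasure_mu01) auto

lemma level_set_in_sets_mu01:
  fixes x :: "real \<Rightarrow> real" and c :: real
  assumes "x \<in> borel_measurable mu01"
  shows "{s \<in> {0..1}. c < \<bar>x s\<bar>} \<in> sets mu01"
proof -
  have "(\<lambda>s. \<bar>x s\<bar>) \<in> borel_measurable mu01" using assms by measurable
  then have "{s \<in> space mu01. c < \<bar>x s\<bar>} \<in> sets mu01" unfolding borel_measurable_iff_greater by blast
  then show ?thesis by simp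
qed

lemma distr_fun_le_1: "distr_fun x \<tau> \<le> 1"
  unfolding distr_fun_def by (rule emeasure_mu01_le_1)

lemma distr_fun_less_top: "distr_fun x \<tau> < top"
  using distr_fun_le_1[of x \<tau>] by (simp add: top.not_eq_extremum order_le_less_trans)

lemma ennreal_enn2real_distr_fun: "ennreal (enn2real (distr_fun x \<tau>)) = distr_fun x \<tau>"
  using distr_fun_less_top[of x \<tau>] by simp

lemma enn2real_distr_fun_le_1: "enn2real (distr_fun x \<tau>) \<le> 1"
  using enn2real_mono[OF distr_fun_le_1[of x \<tau>]] by simp

lemma distr_fun_antimono:
  assumes "x \<in> borel_measurable mu01" "\<tau> \<le> \<tau>'"
  shows "distr_fun x \<tau>' \<le> distr_fun x \<tau>"
  unfolding distr_fun_def
  by (rule emeasure_mono) (use assms level_set_in_sets_mu01 in auto)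

lemma
  assumes "symmetric_space S N"
  shows ss_measurable: "x \<in> S \<Longrightarrow> x \<in> borel_measurable mu01"
    and ss_zero: "(\<lambda>t. 0) \<in> S"
    and ss_add: "x \<in> S \<Longrightarrow> y \<in> S \<Longrightarrow> (\<lambda>t. x t + y t) \<in> S"
    and ss_scale: "x \<in> S \<Longrightarrow> (\<lambda>t. c * x t) \<in> S"
    and ss_norm_nonneg: "x \<in> S \<Longrightarrow> N x \<ge> 0"
    and ss_norm_eq_0_iff: "x \<in> S \<Longrightarrow> N x = 0 \<longleftrightarrow> (AE t in mu01. x t = 0)"
    and ss_norm_triangle: "x \<in> S \<Longrightarrow> y \<in> S \<Longrightarrow> N (\<lambda>t. x t + y t) \<le> N x + N y"
    and ss_norm_scale: "x \<in> S \<Longrightarrow> N (\<lambda>t. c * x t) = \<bar>c\<bar> * N x"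
    and ss_ideal: "y \<in> S \<Longrightarrow> x \<in> borel_measurable mu01 \<Longrightarrow>
        (AE t in mu01. \<bar>x t\<bar> \<le> \<bar>y t\<bar>) \<Longrightarrow> x \<in> S \<and> N x \<le> N y"
    and ss_equimeasurable: "y \<in> S \<Longrightarrow> x \<in> borel_measurable mu01 \<Longrightarrow>
        equimeasurable x y \<Longrightarrow> x \<in> S \<and> N x = N y"
proof -
  note defs = assms[unfolded symmetric_space_def]
  show "x \<in> S \<Longrightarrow> x \<in> borel_measurable mu01" using defs by (elim conjE) blast
  show "(\<lambda>t. 0) \<in> S" using defs by (elim conjE) assumption
  show "x \<in> S \<Longrightarrow> y \<in> S \<Longrightarrow> (\<lambda>t. x t + y t) \<in> S" using defs by (elim conjE) blast
  show "x \<in> S \<Longrightarrow> (\<lambda>t. c * x t) \<in> S" using defs by (elim conjE) blast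
  show "x \<in> S \<Longrightarrow> N x \<ge> 0" using defs by (elim conjE) blast
  show "x \<in> S \<Longrightarrow> N x = 0 \<longleftrightarrow> (AE t in mu01. x t = 0)" using defs by (elim conjE) blast
  show "x \<in> S \<Longrightarrow> y \<in> S \<Longrightarrow> N (\<lambda>t. x t + y t) \<le> N x + N y" using defs by (elim conjE) blast
  show "x \<in> S \<Longrightarrow> N (\<lambda>t. c * x t) = \<bar>c\<bar> * N x" using defs by (elim conjE) blast
  show "y \<in> S \<Longrightarrow> x \<in> borel_measurable mu01 \<Longrightarrow>
      (AE t in mu01. \<bar>x t\<bar> \<le> \<bar>y t\<bar>) \<Longrightarrow> x \<in> S \<and> N x \<le> N y" using defs by (elim conjE) blast
  show "y \<in> S \<Longrightarrow> x \<in> borel_measurable mu01 \<Longrightarrow>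
      equimeasurable x y \<Longrightarrow> x \<in> S \<and> N x = N y" using defs by (elim conjE) blast
qed

lemma ss_norm_zero: "symmetric_space S N \<Longrightarrow> N (\<lambda>t. 0) = 0"
  using ss_norm_eq_0_iff[of S N "\<lambda>t. 0"] ss_zero[of S N] by simp

lemma ss_sum:
  fixes n :: nat
  assumes ss: "symmetric_space S N" and F: "\<And>j. j < n \<Longrightarrow> F j \<in> S"
  shows "(\<lambda>s. \<Sum>j<n. F j s) \<in> S \<and> N (\<lambda>s. \<Sum>j<n. F j s) \<le> (\<Sum>j<n. N (F j))"
  using F
proof (induction n)
  case 0
  then show ?case using ss_zero[OF ss] ss_norm_zero[OF ss] by simp
next
  case (Suc n)
  then show ?case
    using ss_add[OF ss, of "\<lambda>s. \<Sum>j<n. F j s" "F n"] ss_norm_triangle[OF ss, of "\<lambda>s. \<Sum>j<n. F j s" "F n"]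
    by simp
qed

definition step_fun :: "real \<Rightarrow> (nat \<Rightarrow> real set) \<Rightarrow> nat \<Rightarrow> real \<Rightarrow> real" where
  "step_fun \<epsilon> U M s = (\<Sum>i<M. \<epsilon> * indicator (U i) s)"

lemma step_fun_nonneg: "0 \<le> \<epsilon> \<Longrightarrow> 0 \<le> step_fun \<epsilon> U M s"
  unfolding step_fun_def by (rule sum_nonneg) auto

lemma step_fun_measurable:
  assumes "\<And>i. U i \<in> sets mu01"
  shows "step_fun \<epsilon> U M \<in> borel_measurable mu01"
proof -
  have [measurable]: "U i \<in> sets mu01" for i by (rule assms)
  show ?thesis unfolding step_fun_def by measurable
qed

lemma step_fun_mono_sets:
  "0 \<le> \<epsilon> \<Longrightarrow> (\<And>i. U i \<subseteq> V i) \<Longrightarrow> step_fun \<epsilon> U M s \<le> step_fun \<epsilon> V M s"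
  unfolding step_fun_def by (intro sum_mono mult_left_mono) (auto simp: indicator_def)

lemma step_fun_gt_iff:
  assumes e: "0 < \<epsilon>" and tau: "0 \<le> \<tau>" and anti: "\<And>i. U (Suc i) \<subseteq> U i"
  shows "\<tau> < step_fun \<epsilon> U M s \<longleftrightarrow> nat \<lfloor>\<tau>/\<epsilon>\<rfloor> < M \<and> s \<in> U (nat \<lfloor>\<tau>/\<epsilon>\<rfloor>)"
proof -
  define m where "m = nat \<lfloor>\<tau>/\<epsilon>\<rfloor>"
  have anti': "U j \<subseteq> U i" if "i \<le> j" for i j
    using lift_Suc_antimono_le[of U, OF anti that] .
  have "real m \<le> \<tau>/\<epsilon>" "\<tau>/\<epsilon> < real m + 1"
    unfolding m_def using tau e by (simp_all add: of_nat_nat)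
  then have m: "real m * \<epsilon> \<le> \<tau>" "\<tau> < (real m + 1) * \<epsilon>"
    using e by (simp_all add: field_simps)
  have "\<tau> < step_fun \<epsilon> U M s" if "m < M" "s \<in> U m"
  proof -
    have "(\<Sum>i<Suc m. \<epsilon>) = (\<Sum>i<Suc m. \<epsilon> * indicator (U i) s)"
      by (rule sum.cong) (use anti'[of _ m] that in \<open>auto simp: indicator_def less_Suc_eq_le\<close>)
    also have "\<dots> \<le> step_fun \<epsilon> U M s"
      unfolding step_fun_def by (rule sum_mono2) (use that e in auto)
    finally show ?thesis using m by (simp add: algebra_simps)
  qed
  moreover have "step_fun \<epsilon> U M s \<le> \<tau>" if "\<not> (m < M \<and> s \<in> U m)"
  proof -
    have "step_fun \<epsilon> U M s \<le> (\<Sum>i<M. if i < m then \<epsilon> else 0)"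
      unfolding step_fun_def
      by (rule sum_mono) (use anti'[of m] that e in \<open>auto simp: indicator_def not_less\<close>)
    also have "\<dots> = (\<Sum>i\<in>{..<M} \<inter> {..<m}. \<epsilon>)"
      by (simp add: sum.If_cases Int_def)
    also have "\<dots> \<le> (\<Sum>i<m. \<epsilon>)"
      by (rule sum_mono2) (use e in auto)
    finally show ?thesis using m by simp
  qed
  ultimately show ?thesis unfolding m_def[symmetric] by force
qed

lemma distr_fun_step_fun:
  assumes e: "0 < \<epsilon>" and tau: "0 < \<tau>" and anti: "\<And>i. U (Suc i) \<subseteq> U i"
    and U: "\<And>i. U i \<in> sets mu01"
  shows "distr_fun (step_fun \<epsilon> U M) \<tau> =
    (if nat \<lfloor>\<tau>/\<epsilon>\<rfloor> < M then emeasure mu01 (U (nat \<lfloor>\<tau>/\<epsilon>\<rfloor>)) else 0)"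
proof -
  have "U i \<subseteq> {0..1}" for i using sets_mu01_subset[OF U] .
  then have "{t \<in> {0..1}. \<tau> < \<bar>step_fun \<epsilon> U M t\<bar>} =
      (if nat \<lfloor>\<tau>/\<epsilon>\<rfloor> < M then U (nat \<lfloor>\<tau>/\<epsilon>\<rfloor>) else {})"
    using step_fun_gt_iff[where U=U, OF e _ anti] step_fun_nonneg[of \<epsilon>] e tau
    by (auto simp del: atLeastAtMost_iff)
  then show ?thesis unfolding distr_fun_def by simp
qed

lemma equimeasurable_step_fun:
  assumes e: "0 < \<epsilon>" and antiU: "\<And>i. U (Suc i) \<subseteq> U i" and antiV: "\<And>i. V (Suc i) \<subseteq> V i"
    and U: "\<And>i. U i \<in> sets mu01" and V: "\<And>i. V i \<in> sets mu01"
    and eq: "\<And>i. emeasure mu01 (U i) = emeasure mu01 (V i)"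
  shows "equimeasurable (step_fun \<epsilon> U M) (step_fun \<epsilon> V M)"
  unfolding equimeasurable_def
  using distr_fun_step_fun[where U=U, OF e _ antiU U] distr_fun_step_fun[where U=V, OF e _ antiV V] eq
  by simp

text \<open>The image of \<open>(0, b)\<close> under the rotation \<open>s \<mapsto> s - c (mod t)\<close> of \<open>(0, t]\<close>,
  for \<open>0 \<le> c < t\<close> and \<open>b \<le> t\<close>.\<close>

definition rotated_interval :: "real \<Rightarrow> real \<Rightarrow> real \<Rightarrow> real set" where
  "rotated_interval t c b = {0<..<min (t - c) (b - c)} \<union> {t - c<..<min t (t - c + b)}"

lemma rotated_interval_mono: "b' \<le> b \<Longrightarrow> rotated_interval t c b' \<subseteq> rotated_interval t c b"
  unfolding rotated_interval_def by auto

lemma rotated_interval_in_sets_mu01: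
  "0 \<le> c \<Longrightarrow> c \<le> t \<Longrightarrow> t \<le> 1 \<Longrightarrow> rotated_interval t c b \<in> sets mu01"
  by (rule sets_mu01I) (auto simp: rotated_interval_def)

lemma emeasure_rotated_interval:
  assumes "0 \<le> c" "c < t" "t \<le> 1" "0 \<le> b" "b \<le> t"
  shows "emeasure mu01 (rotated_interval t c b) = ennreal b"
proof -
  define A where "A = {0<..<min (t-c) (b-c)}"
  define B where "B = {t-c<..<min t (t-c+b)}"
  have "A = {0<..<max 0 (b - c)}" unfolding A_def using assms by (auto simp: max_def)
  then have eA: "emeasure lborel A = ennreal (max 0 (b - c))" by simp
  have "B = {t-c<..<t-c + min c b}" unfolding B_def using assms by (auto simp: min_def)
  then have eB: "emeasure lborel B = ennreal (min c b)" using assms by simp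
  have "emeasure mu01 (rotated_interval t c b) = emeasure lborel (A \<union> B)"
    unfolding rotated_interval_def A_def B_def using assms by (intro emeasure_mu01) auto
  also have "\<dots> = emeasure lborel A + emeasure lborel B"
    by (rule plus_emeasure[symmetric]) (auto simp: A_def B_def)
  also have "\<dots> = ennreal (max 0 (b - c) + min c b)"
    using eA eB assms by (simp add: ennreal_plus)
  also have "max 0 (b - c) + min c b = b" by (simp add: max_def min_def)
  finally show ?thesis .
qed

lemma mem_rotated_intervalI:
  assumes "0 < s" "s < t" "0 < s'" "s' < b" "b \<le> t" "s' = s + c \<or> s' = s + c - t"
  shows "s \<in> rotated_interval t c b"
  using assms unfolding rotated_interval_def by auto

lemma bij_betw_add_mod:
  fixes n q :: nat
  assumes "0 < n"
  shows "bij_betw (\<lambda>j. (q + j) mod n) {..<n} {..<n}"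
proof -
  have eq: "i = j" if "i \<le> j" "j < n" "(q + i) mod n = (q + j) mod n" for i j
  proof -
    have "n dvd j - i" using that mod_eq_dvd_iff_nat[of "q + i" "q + j" n] by simp
    then show ?thesis using that nat_dvd_not_less[of "j - i" n] by linarith
  qed
  have inj: "inj_on (\<lambda>j. (q + j) mod n) {..<n}"
    by (rule inj_onI) (metis eq linorder_le_cases lessThan_iff)
  moreover have "(\<lambda>j. (q + j) mod n) ` {..<n} \<subseteq> {..<n}"
    using assms by auto
  ultimately show ?thesis
    unfolding bij_betw_def using endo_inj_surj[OF finite_lessThan] by blast
qed

lemma count_lattice_points_ge:
  fixes \<beta> :: real
  assumes "0 \<le> \<beta>" "\<beta> \<le> real n"
  shows "\<beta> - 2 \<le> (\<Sum>l<n. of_bool (1 \<le> l \<and> real l + 1 \<le> \<beta>))"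
proof -
  define K where "K = nat \<lfloor>\<beta>\<rfloor>"
  have K: "real K \<le> \<beta>" "\<beta> < real K + 1" "K \<le> n"
    unfolding K_def using assms by (simp_all add: of_nat_nat) linarith+
  have "\<beta> - 2 \<le> (\<Sum>l\<in>{1..<K}. 1)" using K by simp
  also have "\<dots> = (\<Sum>l\<in>{1..<K}. of_bool (1 \<le> l \<and> real l + 1 \<le> \<beta>))"
    by (rule sum.cong) (use K in auto)
  also have "\<dots> \<le> (\<Sum>l<n. of_bool (1 \<le> l \<and> real l + 1 \<le> \<beta>))"
    by (rule sum_mono2) (use K in auto)
  finally show ?thesis .
qed

lemma rotated_interval_count:
  fixes t s b :: real and n :: nat
  assumes t: "0 < t" and n: "0 < n" and s: "0 < s" "s < t" and b: "0 \<le> b" "b \<le> t"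
  shows "real n * b / t - 2 \<le> (\<Sum>j<n. indicator (rotated_interval t (real j * t / real n) b) s)"
proof -
  define q where "q = nat \<lfloor>real n * s / t\<rfloor>"
  define r where "r = real n * s / t - real q"
  define P where "P l \<longleftrightarrow> 1 \<le> l \<and> real l + 1 \<le> real n * b / t" for l :: nat
  have "0 < real n * s / t" "real n * s / t < real n"
    using s t n by (simp_all add: field_simps)
  then have r: "0 \<le> r" "r < 1" and qn: "q < n"
    unfolding r_def q_def by (simp_all add: of_nat_nat) linarith+
  \<comment> \<open>Writing \<open>s = t (q + r) / n\<close>, the \<open>j\<close>-th rotation sends \<open>t (l + r) / n\<close> to \<open>s\<close>, where
    \<open>l = (q + j) mod n\<close>; that point lies in \<open>(0, b)\<close> when \<open>1 \<le> l\<close> and \<open>l + 1 \<le> n b / t\<close>.\<close>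
  have mem: "s \<in> rotated_interval t (real j * t / real n) b" if j: "j < n" and P: "P ((q + j) mod n)" for j
  proof (rule mem_rotated_intervalI[OF s _ _ b(2)])
    define l where "l = (q + j) mod n"
    have l: "1 \<le> l" "real l + 1 \<le> real n * b / t" "l < n" using P n unfolding P_def l_def by auto
    show "0 < t * (real l + r) / real n" using t n l r by simp
    have "real l + r < real n * b / t" using l r by linarith
    then show "t * (real l + r) / real n < b" using t n by (simp add: field_simps)
    have "q + j < n \<Longrightarrow> l = q + j" "\<not> q + j < n \<Longrightarrow> l = q + j - n"
      unfolding l_def using j qn by (auto simp: mod_if)
    then show "t * (real l + r) / real n = s + real j * t / real n \<or>
        t * (real l + r) / real n = s + real j * t / real n - t"
      using t n unfolding r_def by (cases "q + j < n") (auto simp: field_simps of_nat_diff)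
  qed
  have "real n * b / t - 2 \<le> (\<Sum>l<n. of_bool (P l))"
    unfolding P_def by (rule count_lattice_points_ge) (use b t in \<open>simp_all add: field_simps mult_right_mono\<close>)
  also have "\<dots> = (\<Sum>j<n. of_bool (P ((q + j) mod n)))"
    using sum.reindex_bij_betw[OF bij_betw_add_mod[OF n, of q], of "\<lambda>l. of_bool (P l) :: real"] by simp
  also have "\<dots> \<le> (\<Sum>j<n. indicator (rotated_interval t (real j * t / real n) b) s)"
    by (rule sum_mono) (use mem in auto)
  finally show ?thesis .
qed

lemma ss_indicator_norm_le:
  assumes ss: "symmetric_space S N" and hS: "h \<in> S" and t: "t \<le> 1" and L: "0 < L"
    and below: "\<And>s. s \<in> {0<..<t} \<Longrightarrow> L \<le> \<bar>h s\<bar>"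
  shows "L * N (indicator {0<..<t}) \<le> N h"
proof -
  have [measurable]: "{0<..<t} \<in> sets mu01" using t by (rule Ioo_in_sets_mu01)
  have "(\<lambda>s. L * indicator {0<..<t} s) \<in> borel_measurable mu01" by measurable
  moreover have "AE s in mu01. \<bar>L * indicator {0<..<t} s\<bar> \<le> \<bar>h s\<bar>"
    using below L by (intro AE_I2) (auto simp: indicator_def)
  ultimately have LS: "(\<lambda>s. L * indicator {0<..<t} s) \<in> S"
    and LN: "N (\<lambda>s. L * indicator {0<..<t} s) \<le> N h"
    using ss_ideal[OF ss hS] by auto
  have "indicator {0<..<t} = (\<lambda>s. (1 / L) * (L * indicator {0<..<t} s))"
    using L by (auto simp: fun_eq_iff)
  then have "indicator {0<..<t} \<in> S" using ss_scale[OF ss LS, of "1 / L"] by simp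
  then show ?thesis using LN ss_norm_scale[OF ss, of "indicator {0<..<t}" L] L by simp
qed

lemma ss_rotated_step_fun:
  assumes ss: "symmetric_space S N" and e: "0 < \<epsilon>" and t: "t \<le> 1" and c: "0 \<le> c" "c < t"
    and b: "\<And>i. 0 \<le> b i" "\<And>i. b i \<le> t" "\<And>i. b (Suc i) \<le> b i"
    and gS: "step_fun \<epsilon> (\<lambda>i. {0<..<b i}) M \<in> S"
  shows "step_fun \<epsilon> (\<lambda>i. rotated_interval t c (b i)) M \<in> S \<and>
    N (step_fun \<epsilon> (\<lambda>i. rotated_interval t c (b i)) M) = N (step_fun \<epsilon> (\<lambda>i. {0<..<b i}) M)"
proof (rule ss_equimeasurable[OF ss gS])
  have R: "rotated_interval t c (b i) \<in> sets mu01" for i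
    using c t by (intro rotated_interval_in_sets_mu01) auto
  show "step_fun \<epsilon> (\<lambda>i. rotated_interval t c (b i)) M \<in> borel_measurable mu01"
    by (rule step_fun_measurable[OF R])
  show "equimeasurable (step_fun \<epsilon> (\<lambda>i. rotated_interval t c (b i)) M)
      (step_fun \<epsilon> (\<lambda>i. {0<..<b i}) M)"
  proof (rule equimeasurable_step_fun[OF e])
    show "rotated_interval t c (b (Suc i)) \<subseteq> rotated_interval t c (b i)" for i
      by (rule rotated_interval_mono[OF b(3)])
    show "{0<..<b (Suc i)} \<subseteq> {0<..<b i}" for i using b(3)[of i] by auto
    show "rotated_interval t c (b i) \<in> sets mu01" for i by (rule R)
    show "{0<..<b i} \<in> sets mu01" for i using b(2)[of i] t by (intro Ioo_in_sets_mu01) auto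
    show "emeasure mu01 (rotated_interval t c (b i)) = emeasure mu01 {0<..<b i}" for i
      using b(1,2)[of i] c t by (simp add: emeasure_rotated_interval emeasure_mu01_Ioo)
  qed
qed

lemma sum_rotated_step_fun_ge:
  assumes e: "0 \<le> \<epsilon>" and t: "0 < t" and n: "0 < n" and s: "0 < s" "s < t"
    and b: "\<And>i. 0 \<le> b i" "\<And>i. b i \<le> t"
  shows "(\<Sum>i<M. \<epsilon> * (real n * b i / t - 2)) \<le>
    (\<Sum>j<n. step_fun \<epsilon> (\<lambda>i. rotated_interval t (real j * t / real n) (b i)) M s)"
proof -
  have "(\<Sum>i<M. \<epsilon> * (real n * b i / t - 2)) \<le>
      (\<Sum>i<M. \<epsilon> * (\<Sum>j<n. indicator (rotated_interval t (real j * t / real n) (b i)) s))"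
    by (intro sum_mono mult_left_mono rotated_interval_count) (use assms in auto)
  also have "\<dots> = (\<Sum>j<n. step_fun \<epsilon> (\<lambda>i. rotated_interval t (real j * t / real n) (b i)) M s)"
    unfolding step_fun_def by (simp only: sum_distrib_left) (rule sum.swap)
  finally show ?thesis .
qed

lemma step_fun_rotation_average:
  assumes ss: "symmetric_space S N" and e: "0 < \<epsilon>" and t: "0 < t" "t \<le> 1" and n: "0 < n"
    and b: "\<And>i. 0 \<le> b i" "\<And>i. b i \<le> t" "\<And>i. b (Suc i) \<le> b i"
    and gS: "step_fun \<epsilon> (\<lambda>i. {0<..<b i}) M \<in> S" and phi: "0 \<le> N (indicator {0<..<t})"
  shows "((\<Sum>i<M. \<epsilon> * b i) * real n / t - 2 * real M * \<epsilon>) * N (indicator {0<..<t})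
    \<le> real n * N (step_fun \<epsilon> (\<lambda>i. {0<..<b i}) M)"
proof -
  define g where "g = step_fun \<epsilon> (\<lambda>i. {0<..<b i}) M"
  define G where "G j = step_fun \<epsilon> (\<lambda>i. rotated_interval t (real j * t / real n) (b i)) M" for j
  have G: "G j \<in> S \<and> N (G j) = N g" if "j < n" for j
    unfolding G_def g_def using that n t
    by (intro ss_rotated_step_fun[OF ss e t(2) _ _ b gS]) (simp_all add: field_simps)
  define h where "h = (\<lambda>s. \<Sum>j<n. G j s)"
  have hS: "h \<in> S" and "N h \<le> (\<Sum>j<n. N (G j))"
    using ss_sum[OF ss, of n G] G unfolding h_def by auto
  then have Nh: "N h \<le> real n * N g" using G by simp
  define L where "L = (\<Sum>i<M. \<epsilon> * (real n * b i / t - 2))"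
  have "L = (\<Sum>i<M. \<epsilon> * b i) * real n / t - 2 * real M * \<epsilon>"
    unfolding L_def by (simp add: algebra_simps sum_subtractf sum_distrib_left sum_divide_distrib)
  moreover have "L * N (indicator {0<..<t}) \<le> real n * N g"
  proof (cases "0 < L")
    case True
    have "L \<le> \<bar>h s\<bar>" if "s \<in> {0<..<t}" for s
      using sum_rotated_step_fun_ge[of \<epsilon> t n s b M] that e t n b
      unfolding L_def h_def G_def by auto
    then have "L * N (indicator {0<..<t}) \<le> N h"
      by (rule ss_indicator_norm_le[OF ss hS t(2) True])
    then show ?thesis using Nh by linarith
  next
    case False
    then have "L * N (indicator {0<..<t}) \<le> 0" using phi by (simp add: mult_nonpos_nonneg)
    also have "0 \<le> real n * N g" using ss_norm_nonneg[OF ss gS] by (simp add: g_def)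
    finally show ?thesis .
  qed
  ultimately show ?thesis unfolding g_def by simp
qed

lemma step_fun_integral_le:
  assumes ss: "symmetric_space S N" and e: "0 < \<epsilon>" and t: "0 < t" "t \<le> 1"
    and b: "\<And>i. 0 \<le> b i" "\<And>i. b i \<le> t" "\<And>i. b (Suc i) \<le> b i"
    and gS: "step_fun \<epsilon> (\<lambda>i. {0<..<b i}) M \<in> S" and phi: "0 < N (indicator {0<..<t})"
  shows "(\<Sum>i<M. \<epsilon> * b i) \<le> t * N (step_fun \<epsilon> (\<lambda>i. {0<..<b i}) M) / N (indicator {0<..<t})"
proof -
  define X where "X = (\<Sum>i<M. \<epsilon> * b i)"
  define Y where "Y = N (step_fun \<epsilon> (\<lambda>i. {0<..<b i}) M) / N (indicator {0<..<t})"
  have avg: "X / t \<le> Y + 2 * real M * \<epsilon> / real n" if n: "0 < n" for n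
  proof -
    have "(X * real n / t - 2 * real M * \<epsilon>) * N (indicator {0<..<t})
        \<le> real n * N (step_fun \<epsilon> (\<lambda>i. {0<..<b i}) M)"
      unfolding X_def using step_fun_rotation_average[OF ss e t n b gS] phi by simp
    then show ?thesis using n t phi unfolding Y_def by (simp add: field_simps)
  qed
  have "X / t \<le> Y"
  proof (rule field_le_epsilon)
    fix \<delta> :: real assume "0 < \<delta>"
    obtain n :: nat where n: "2 * real M * \<epsilon> / \<delta> < real n"
      using reals_Archimedean2 by blast
    moreover have "0 \<le> 2 * real M * \<epsilon> / \<delta>" using e \<open>0 < \<delta>\<close> by simp
    ultimately have n0: "0 < n" by linarith
    then have "2 * real M * \<epsilon> / real n \<le> \<delta>"
      using n \<open>0 < \<delta>\<close> by (simp add: field_simps)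
    then show "X / t \<le> Y + \<delta>" using avg[OF n0] by linarith
  qed
  then show ?thesis using t unfolding X_def Y_def by (simp add: field_simps)
qed

lemma step_fun_level_sets_le:
  fixes x :: "real \<Rightarrow> real"
  assumes e: "0 < \<epsilon>"
  shows "step_fun \<epsilon> (\<lambda>i. {s \<in> {0..1}. real (Suc i) * \<epsilon> < \<bar>x s\<bar>}) M s \<le> \<bar>x s\<bar>"
proof (rule ccontr)
  define A where "A = (\<lambda>i. {s \<in> {0..1}. real (Suc i) * \<epsilon> < \<bar>x s\<bar>})"
  define m where "m = nat \<lfloor>\<bar>x s\<bar> / \<epsilon>\<rfloor>"
  have anti: "A (Suc i) \<subseteq> A i" for i
    unfolding A_def using e by (auto simp: field_simps)
  assume "\<not> ?thesis"
  then have "\<bar>x s\<bar> < step_fun \<epsilon> A M s" unfolding A_def by simp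
  then have "s \<in> A m" using step_fun_gt_iff[where U=A, OF e _ anti] unfolding m_def by simp
  then have "real (Suc m) * \<epsilon> < \<bar>x s\<bar>" unfolding A_def by simp
  moreover have "\<bar>x s\<bar> / \<epsilon> < real (Suc m)" unfolding m_def by (simp add: of_nat_nat) linarith
  ultimately show False using e by (simp add: field_simps)
qed

lemma enn2real_distr_fun_antimono:
  "x \<in> borel_measurable mu01 \<Longrightarrow> \<tau> \<le> \<tau>' \<Longrightarrow> enn2real (distr_fun x \<tau>') \<le> enn2real (distr_fun x \<tau>)"
  by (intro enn2real_mono distr_fun_antimono distr_fun_less_top)

text \<open>The step function below is a discretisation of \<open>x\<^sup>*\<close> from below.\<close>

lemma ss_distr_step_fun:
  assumes ss: "symmetric_space S N" and xS: "x \<in> S" and e: "0 < \<epsilon>"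
  shows "step_fun \<epsilon> (\<lambda>i. {0<..<enn2real (distr_fun x (real (Suc i) * \<epsilon>))}) M \<in> S \<and>
    N (step_fun \<epsilon> (\<lambda>i. {0<..<enn2real (distr_fun x (real (Suc i) * \<epsilon>))}) M) \<le> N x"
proof -
  define a where "a i = enn2real (distr_fun x (real (Suc i) * \<epsilon>))" for i
  define A where "A i = {s \<in> {0..1}. real (Suc i) * \<epsilon> < \<bar>x s\<bar>}" for i
  have xm: "x \<in> borel_measurable mu01" by (rule ss_measurable[OF ss xS])
  have A: "A i \<in> sets mu01" "A (Suc i) \<subseteq> A i" for i
    unfolding A_def using level_set_in_sets_mu01[OF xm] e by (auto simp: field_simps)
  have I: "{0<..<a i} \<in> sets mu01" for i
    unfolding a_def by (intro Ioo_in_sets_mu01 enn2real_distr_fun_le_1)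
  have "step_fun \<epsilon> A M \<in> S \<and> N (step_fun \<epsilon> A M) \<le> N x"
    using ss_ideal[OF ss xS step_fun_measurable[OF A(1)]] step_fun_level_sets_le[OF e]
      step_fun_nonneg[of \<epsilon>] e
    unfolding A_def by (auto intro!: AE_I2)
  moreover have "equimeasurable (step_fun \<epsilon> (\<lambda>i. {0<..<a i}) M) (step_fun \<epsilon> A M)"
  proof (rule equimeasurable_step_fun[where U="\<lambda>i. {0<..<a i}" and V=A, OF e _ A(2) I A(1)])
    show "{0<..<a (Suc i)} \<subseteq> {0<..<a i}" for i
      using enn2real_distr_fun_antimono[OF xm, of "real (Suc i) * \<epsilon>" "real (Suc (Suc i)) * \<epsilon>"] e
      unfolding a_def by auto
    show "emeasure mu01 {0<..<a i} = emeasure mu01 (A i)" for i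
      unfolding a_def
      by (simp add: emeasure_mu01_Ioo enn2real_distr_fun_le_1 ennreal_enn2real_distr_fun)
        (simp add: distr_fun_def A_def)
  qed
  ultimately show ?thesis
    using ss_equimeasurable[OF ss _ step_fun_measurable[OF I]] unfolding a_def by force
qed

lemma sum_distr_fun_le:
  assumes ss: "symmetric_space S N" and xS: "x \<in> S"
    and e: "0 < \<epsilon>" and t: "0 < t" "t \<le> 1" and phi: "0 < N (indicator {0<..<t})"
  shows "(\<Sum>i<M. \<epsilon> * min t (enn2real (distr_fun x (real (Suc i) * \<epsilon>))))
    \<le> t * N x / N (indicator {0<..<t})"
proof -
  define a where "a i = enn2real (distr_fun x (real (Suc i) * \<epsilon>))" for i
  have xm: "x \<in> borel_measurable mu01" by (rule ss_measurable[OF ss xS])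
  have a: "0 \<le> a i" "a (Suc i) \<le> a i" for i
    unfolding a_def using enn2real_distr_fun_antimono[OF xm] e by simp_all
  define g' where "g' = step_fun \<epsilon> (\<lambda>i. {0<..<a i}) M"
  define g where "g = step_fun \<epsilon> (\<lambda>i. {0<..<min t (a i)}) M"
  have "g' \<in> S" "N g' \<le> N x"
    using ss_distr_step_fun[OF ss xS e] unfolding g'_def a_def by auto
  moreover have "g \<in> borel_measurable mu01"
    unfolding g_def using t by (intro step_fun_measurable Ioo_in_sets_mu01) simp
  moreover have "\<bar>g s\<bar> \<le> \<bar>g' s\<bar>" for s
  proof -
    have "g s \<le> g' s"
      unfolding g_def g'_def by (rule step_fun_mono_sets) (use e in auto)
    then show ?thesis using step_fun_nonneg[of \<epsilon>] e unfolding g_def by simp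
  qed
  ultimately have gS: "g \<in> S" and Ng: "N g \<le> N x"
    using ss_ideal[OF ss, of g' g] by force+
  have "(\<Sum>i<M. \<epsilon> * min t (a i)) \<le> t * N g / N (indicator {0<..<t})"
    unfolding g_def
    by (rule step_fun_integral_le[OF ss e t _ _ _ gS[unfolded g_def] phi])
      (use a t in \<open>auto simp: min_le_iff_disj\<close>)
  also have "\<dots> \<le> t * N x / N (indicator {0<..<t})"
    using Ng t phi by (intro divide_right_mono mult_left_mono) auto
  finally show ?thesis unfolding a_def .
qed

lemma rearr_le:
  assumes "0 \<le> \<tau>" "distr_fun x \<tau> < ennreal s"
  shows "rearr x s \<le> \<tau>"
  unfolding rearr_def using assms by (intro cInf_lower bdd_belowI[of _ 0]) auto

lemma le_enn2real_distr_fun_if_less_rearr: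
  assumes "0 \<le> \<tau>" "\<tau> < rearr x s"
  shows "s \<le> enn2real (distr_fun x \<tau>)"
proof (rule ccontr)
  assume "\<not> ?thesis"
  then have "ennreal (enn2real (distr_fun x \<tau>)) < ennreal s" by (simp add: ennreal_less_iff)
  then have "rearr x s \<le> \<tau>" using assms(1) by (intro rearr_le) (simp_all add: ennreal_enn2real_distr_fun)
  then show False using assms(2) by simp
qed

lemma rearr_le_level_sum:
  fixes x :: "real \<Rightarrow> real" and \<epsilon> s :: real
  assumes e: "0 < \<epsilon>"
  shows "ennreal (rearr x s) \<le> ennreal \<epsilon> +
    (\<Sum>i. ennreal \<epsilon> * indicator {..enn2real (distr_fun x (real (Suc i) * \<epsilon>))} s)"
proof (cases "rearr x s \<le> 0")
  case True
  then show ?thesis by (simp add: ennreal_neg)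
next
  case False
  define R where "R = rearr x s"
  define c where "c = \<lceil>R / \<epsilon>\<rceil>"
  define K where "K = nat c - 1"
  have "1 \<le> c" using False e by (simp add: R_def c_def le_ceiling_iff)
  then have "real K = of_int c - 1" unfolding K_def by (simp add: of_nat_diff)
  then have "R / \<epsilon> \<le> 1 + real K" "real K < R / \<epsilon>" unfolding c_def by linarith+
  then have K: "R \<le> \<epsilon> + real K * \<epsilon>" "real K * \<epsilon> < R" using e by (simp_all add: field_simps)
  have mem: "s \<le> enn2real (distr_fun x (real (Suc i) * \<epsilon>))" if "i < K" for i
  proof (rule le_enn2real_distr_fun_if_less_rearr)
    have "real (Suc i) * \<epsilon> \<le> real K * \<epsilon>" using that e by simp
    then show "real (Suc i) * \<epsilon> < rearr x s" using K(2) unfolding R_def by linarith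
  qed (use e in simp)
  have "(\<Sum>i<K. ennreal \<epsilon> * indicator {..enn2real (distr_fun x (real (Suc i) * \<epsilon>))} s)
      = (\<Sum>i<K. ennreal \<epsilon>)"
    by (rule sum.cong) (use mem in auto)
  also have "\<dots> = ennreal (real K * \<epsilon>)"
    using e by (simp add: ennreal_mult ennreal_of_nat_eq_real_of_nat)
  finally have sum_eq: "(\<Sum>i<K. ennreal \<epsilon> * indicator {..enn2real (distr_fun x (real (Suc i) * \<epsilon>))} s)
      = ennreal (real K * \<epsilon>)" .
  have "ennreal R \<le> ennreal (\<epsilon> + real K * \<epsilon>)" using K(1) by (rule ennreal_leI)
  also have "\<dots> = ennreal \<epsilon> +
      (\<Sum>i<K. ennreal \<epsilon> * indicator {..enn2real (distr_fun x (real (Suc i) * \<epsilon>))} s)"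
    unfolding sum_eq using e by (simp add: ennreal_plus)
  also have "\<dots> \<le> ennreal \<epsilon> +
      (\<Sum>i. ennreal \<epsilon> * indicator {..enn2real (distr_fun x (real (Suc i) * \<epsilon>))} s)"
    by (intro add_left_mono sum_le_suminf) auto
  finally show ?thesis unfolding R_def .
qed

lemma nn_integral_rearr_le_level_sum:
  fixes x :: "real \<Rightarrow> real" and \<epsilon> t :: real
  assumes e: "0 < \<epsilon>" and t: "0 < t"
  shows "(\<integral>\<^sup>+ s\<in>{0<..<t}. ennreal (rearr x s) \<partial>lborel) \<le> ennreal (\<epsilon> * t) +
     (\<Sum>i. ennreal \<epsilon> * ennreal (min t (enn2real (distr_fun x (real (Suc i) * \<epsilon>)))))"
proof -
  define a where "a i = enn2real (distr_fun x (real (Suc i) * \<epsilon>))" for i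
  define A where "A i = {..a i} \<inter> {0<..<t}" for i
  have int_sum: "(\<integral>\<^sup>+ s. (\<Sum>i. ennreal \<epsilon> * indicator (A i) s) \<partial>lborel)
      = (\<Sum>i. ennreal \<epsilon> * emeasure lborel (A i))"
    by (rule trans[OF nn_integral_suminf suminf_cong], simp_all add: A_def)
      (rule nn_integral_cmult_indicator, simp)
  have int_Ioo: "(\<integral>\<^sup>+ s. ennreal \<epsilon> * indicator {0<..<t} s \<partial>lborel)
      = ennreal \<epsilon> * emeasure lborel {0<..<t}"
    by (rule nn_integral_cmult_indicator) simp
  have "(\<integral>\<^sup>+ s\<in>{0<..<t}. ennreal (rearr x s) \<partial>lborel) \<le>
     (\<integral>\<^sup>+ s. ennreal \<epsilon> * indicator {0<..<t} s + (\<Sum>i. ennreal \<epsilon> * indicator (A i) s) \<partial>lborel)"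
  proof (rule nn_integral_mono)
    fix s
    have "indicator (A i) s = (indicator {..a i} s :: ennreal)" if "s \<in> {0<..<t}" for i
      using that by (simp add: A_def indicator_def)
    then show "ennreal (rearr x s) * indicator {0<..<t} s \<le>
      ennreal \<epsilon> * indicator {0<..<t} s + (\<Sum>i. ennreal \<epsilon> * indicator (A i) s)"
      using rearr_le_level_sum[OF e, of x s] by (cases "s \<in> {0<..<t}") (simp_all add: a_def)
  qed
  also have "\<dots> = ennreal \<epsilon> * emeasure lborel {0<..<t} + (\<Sum>i. ennreal \<epsilon> * emeasure lborel (A i))"
    unfolding int_Ioo[symmetric] int_sum[symmetric] by (rule nn_integral_add) (auto simp: A_def)
  also have "\<dots> \<le> ennreal (\<epsilon> * t) + (\<Sum>i. ennreal \<epsilon> * ennreal (min t (a i)))"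
  proof (intro add_mono suminf_le mult_left_mono)
    have "emeasure lborel (A i) \<le> emeasure lborel {0..min t (a i)}" for i
      by (rule emeasure_mono) (auto simp: A_def)
    then show "emeasure lborel (A i) \<le> ennreal (min t (a i))" for i
      using t by (simp add: a_def)
  qed (use e t in \<open>auto simp: ennreal_mult\<close>)
  finally show ?thesis unfolding a_def .
qed

lemma nn_integral_rearr_le:
  assumes ss: "symmetric_space S N" and xS: "x \<in> S"
    and t: "0 < t" "t \<le> 1" and phi: "0 < N (indicator {0<..<t})"
  shows "(\<integral>\<^sup>+ s\<in>{0<..<t}. ennreal (rearr x s) \<partial>lborel) \<le> ennreal (t * N x / N (indicator {0<..<t}))"
proof (rule ennreal_le_epsilon)
  fix e :: real assume "0 < e"
  define \<epsilon> where "\<epsilon> = e / t"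
  have \<epsilon>: "0 < \<epsilon>" "\<epsilon> * t = e" unfolding \<epsilon>_def using \<open>0 < e\<close> t by simp_all
  define a where "a i = enn2real (distr_fun x (real (Suc i) * \<epsilon>))" for i
  have sum_le: "(\<Sum>i. ennreal \<epsilon> * ennreal (min t (a i))) \<le> ennreal (t * N x / N (indicator {0<..<t}))"
  proof (rule suminf_le_const)
    fix M
    have "(\<Sum>i<M. ennreal \<epsilon> * ennreal (min t (a i))) = (\<Sum>i<M. ennreal (\<epsilon> * min t (a i)))"
      by (rule sum.cong) (use \<epsilon> in \<open>simp_all add: ennreal_mult'\<close>)
    also have "\<dots> = ennreal (\<Sum>i<M. \<epsilon> * min t (a i))"
      by (rule sum_ennreal) (use \<epsilon> t in \<open>simp add: a_def\<close>)
    also have "\<dots> \<le> ennreal (t * N x / N (indicator {0<..<t}))"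
      unfolding a_def by (intro ennreal_leI sum_distr_fun_le[OF ss xS \<epsilon>(1) t phi])
    finally show "(\<Sum>i<M. ennreal \<epsilon> * ennreal (min t (a i))) \<le> \<dots>" .
  qed simp
  have "(\<integral>\<^sup>+ s\<in>{0<..<t}. ennreal (rearr x s) \<partial>lborel)
      \<le> ennreal (\<epsilon> * t) + (\<Sum>i. ennreal \<epsilon> * ennreal (min t (a i)))"
    using nn_integral_rearr_le_level_sum[OF \<epsilon>(1) t(1), of x] unfolding a_def .
  also have "\<dots> \<le> ennreal e + ennreal (t * N x / N (indicator {0<..<t}))"
    using sum_le \<epsilon>(2) by (intro add_mono) auto
  finally show "(\<integral>\<^sup>+ s\<in>{0<..<t}. ennreal (rearr x s) \<partial>lborel)
      \<le> ennreal (t * N x / N (indicator {0<..<t})) + ennreal e"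
    by (simp add: add.commute)
qed

text \<open>\<open>x\<^sup>*\<close> vanishes beyond the measure of the support of \<open>x\<close>.\<close>

lemma nn_integral_rearr_le_support:
  assumes supp: "distr_fun x 0 \<le> ennreal t'" and "0 \<le> t'"
  shows "(\<integral>\<^sup>+ s\<in>{0<..<t}. ennreal (rearr x s) \<partial>lborel)
    \<le> (\<integral>\<^sup>+ s\<in>{0<..<t'}. ennreal (rearr x s) \<partial>lborel)"
proof (rule nn_integral_mono_AE)
  have le: "ennreal (rearr x s) * indicator {0<..<t} s \<le> ennreal (rearr x s) * indicator {0<..<t'} s"
    if "s \<noteq> t'" for s
  proof (cases "t' < s")
    case True
    then have "ennreal t' < ennreal s" using \<open>0 \<le> t'\<close> by (simp add: ennreal_lessI)
    with supp have "distr_fun x 0 < ennreal s" by (rule order_le_less_trans)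
    then have "rearr x s \<le> 0" by (intro rearr_le) auto
    then show ?thesis by (simp add: ennreal_neg)
  qed (use that in \<open>auto simp: indicator_def\<close>)
  show "AE s in lborel. ennreal (rearr x s) * indicator {0<..<t} s
      \<le> ennreal (rearr x s) * indicator {0<..<t'} s"
    using AE_lborel_singleton[of t'] by eventually_elim (rule le)
qed

lemma ratio_small_near_0:
  fixes \<phi> \<psi> :: "real \<Rightarrow> real"
  assumes lim: "((\<lambda>t. \<psi> t / \<phi> t) \<longlongrightarrow> 0) (at_right 0)" and \<eta>: "0 < \<eta>"
  obtains d where "0 < d" "d \<le> 1" "\<And>s. 0 < s \<Longrightarrow> s \<le> d \<Longrightarrow> \<psi> s / \<phi> s \<le> \<eta>"
proof -
  have "eventually (\<lambda>s. \<psi> s / \<phi> s < \<eta>) (at_right 0)"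
    using order_tendstoD(2)[OF lim \<eta>] .
  then obtain b where "0 < b" and b: "\<And>s. 0 < s \<Longrightarrow> s < b \<Longrightarrow> \<psi> s / \<phi> s < \<eta>"
    unfolding eventually_at_right_field by auto
  show ?thesis
    by (rule that[of "min (b / 2) 1"]) (use \<open>0 < b\<close> b in \<open>auto intro: less_imp_le\<close>)
qed

lemma classG_ratio_bounded:
  fixes \<phi> \<psi> :: "real \<Rightarrow> real"
  assumes G\<phi>: "classG \<phi>" and G\<psi>: "classG \<psi>"
    and lim: "((\<lambda>t. \<psi> t / \<phi> t) \<longlongrightarrow> 0) (at_right 0)"
  obtains K where "\<And>t. t \<in> {0<..1} \<Longrightarrow> \<psi> t / \<phi> t \<le> K"
proof -
  obtain d where d: "0 < d" "d \<le> 1" "\<And>s. 0 < s \<Longrightarrow> s \<le> d \<Longrightarrow> \<psi> s / \<phi> s \<le> 1"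
    using ratio_small_near_0[OF lim, of 1] by auto
  have "\<psi> t / \<phi> t \<le> max 1 (\<psi> 1 / \<phi> d)" if t: "t \<in> {0<..1}" for t
  proof (cases "t \<le> d")
    case True
    then show ?thesis using d t by force
  next
    case False
    have pos: "0 < \<phi> d" "0 < \<psi> t" using G\<phi> G\<psi> d t unfolding classG_def by auto
    have "\<phi> d \<le> \<phi> t" "\<psi> t \<le> \<psi> 1"
      using G\<phi> G\<psi> d t False unfolding classG_def by (auto intro: mono_onD)
    then have "\<psi> t / \<phi> t \<le> \<psi> 1 / \<phi> d"
      using pos by (intro frac_le) auto
    then show ?thesis by simp
  qed
  then show ?thesis by (rule that)
qed

lemma classG_slope_le:
  fixes \<psi> :: "real \<Rightarrow> real"
  assumes G: "classG \<psi>" and d: "0 < \<delta>" "\<delta> < t" "t \<le> 1"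
  shows "\<psi> t / t \<le> 2 * \<psi> \<delta> / \<delta>"
proof -
  have cc: "concave_on {0<..1} \<psi>" and pos: "\<And>s. s \<in> {0<..1} \<Longrightarrow> \<psi> s > 0"
    using G unfolding classG_def by auto
  define l where "l = (\<delta>/2) / (t - \<delta>/2)"
  have l0: "0 \<le> l" "l \<le> 1" using d by (auto simp: l_def field_simps)
  have ne: "t - \<delta>/2 \<noteq> 0" "2*t - \<delta> \<noteq> 0" using d by auto
  have lt: "l * (t - \<delta>/2) = \<delta>/2" unfolding l_def using ne by (simp add: field_simps)
  have pt: "(1 - l) * (\<delta>/2) + l * t = \<delta>"
  proof -
    have "(1 - l) * (\<delta>/2) + l * t = \<delta>/2 + l * (t - \<delta>/2)" by (simp add: field_simps)
    also have "\<dots> = \<delta>/2 + \<delta>/2" by (simp only: lt)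
    finally show ?thesis by simp
  qed
  have "(1 - l) * \<psi> (\<delta>/2) + l * \<psi> t \<le> \<psi> ((1 - l) *\<^sub>R (\<delta>/2) + l *\<^sub>R t)"
    by (rule concave_onD[OF cc l0]) (use d in auto)
  then have "(1 - l) * \<psi> (\<delta>/2) + l * \<psi> t \<le> \<psi> \<delta>" using pt by simp
  moreover have "0 \<le> (1 - l) * \<psi> (\<delta>/2)" using l0 pos[of "\<delta>/2"] d by simp
  ultimately have A: "l * \<psi> t \<le> \<psi> \<delta>" by linarith
  have "\<delta> / (2 * t) \<le> l" using d unfolding l_def by (simp add: field_simps)
  then have "\<delta> / (2 * t) * \<psi> t \<le> l * \<psi> t" using pos[of t] d by (intro mult_right_mono) auto
  with A have "\<delta> / (2 * t) * \<psi> t \<le> \<psi> \<delta>" by linarith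
  then show ?thesis using d by (simp add: field_simps)
qed

lemma pairwise_disjoint_seq_suminf_support_le_1:
  fixes u :: "nat \<Rightarrow> real \<Rightarrow> real"
  assumes um: "\<And>n. u n \<in> borel_measurable mu01" and dis: "pairwise_disjoint_seq u"
  shows "(\<Sum>n. distr_fun (u n) 0) \<le> 1"
proof -
  define B where "B n = {s \<in> {0..1}. 0 < \<bar>u n s\<bar>}" for n
  have B: "B n \<in> sets mu01" for n unfolding B_def by (rule level_set_in_sets_mu01[OF um])
  have "AE s in mu01. \<forall>m n. m \<noteq> n \<longrightarrow> u m s * u n s = 0"
    using dis unfolding pairwise_disjoint_seq_def by (simp add: AE_all_countable)
  then obtain Z where Z: "{s \<in> space mu01. \<not> (\<forall>m n. m \<noteq> n \<longrightarrow> u m s * u n s = 0)} \<subseteq> Z"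
    "emeasure mu01 Z = 0" "Z \<in> sets mu01"
    by (rule AE_E)
  then have Z_null: "Z \<in> null_sets mu01" by auto
  define D where "D n = B n - Z" for n
  have "emeasure mu01 (D n) = distr_fun (u n) 0" for n
    unfolding D_def using emeasure_Diff_null_set[OF Z_null B] by (simp add: B_def distr_fun_def)
  moreover have "disjoint_family D"
    unfolding disjoint_family_on_def D_def B_def using Z(1) by fastforce
  then have "(\<Sum>n. emeasure mu01 (D n)) = emeasure mu01 (\<Union> (range D))"
    using B Z(3) unfolding D_def by (intro suminf_emeasure) auto
  ultimately show ?thesis using emeasure_mu01_le_1 by simp
qed

lemma pairwise_disjoint_seq_small_support:
  fixes u :: "nat \<Rightarrow> real \<Rightarrow> real"
  assumes um: "\<And>n. u n \<in> borel_measurable mu01" and dis: "pairwise_disjoint_seq u" and d: "0 < d"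
  obtains n where "distr_fun (u n) 0 < ennreal d"
proof (rule ccontr)
  assume "\<not> thesis"
  then have big: "ennreal d \<le> distr_fun (u n) 0" for n using that by (meson not_le)
  obtain K :: nat where K: "1 / d < real K" using reals_Archimedean2 by blast
  have "ennreal (real K * d) = (\<Sum>n<K. ennreal d)"
    using d by (simp add: ennreal_mult ennreal_of_nat_eq_real_of_nat)
  also have "\<dots> \<le> (\<Sum>n<K. distr_fun (u n) 0)"
    by (rule sum_mono) (rule big)
  also have "\<dots> \<le> (\<Sum>n. distr_fun (u n) 0)"
    by (rule sum_le_suminf) auto
  also have "\<dots> \<le> 1" by (rule pairwise_disjoint_seq_suminf_support_le_1[OF um dis])
  finally have "real K * d \<le> 1" by (simp add: ennreal_le_1)
  moreover have "1 < real K * d" using K d by (simp add: field_simps)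
  ultimately show False by simp
qed

lemma generator_in_closed_span:
  assumes ss: "symmetric_space S N" and uS: "u n \<in> S"
  shows "u n \<in> closed_span S N u"
proof -
  have "\<exists>m c. u n = (\<lambda>t. \<Sum>i<m. c i * u i t)"
    by (intro exI[of _ "Suc n"] exI[of _ "\<lambda>i. if i = n then 1 else 0"])
      (simp add: if_distrib sum.delta' cong: if_cong)
  then show ?thesis
    unfolding closed_span_def using uS ss_norm_zero[OF ss]
    by (intro CollectI conjI exI[of _ "\<lambda>k. u n"]) auto
qed

lemma classG_weight_le:
  assumes G\<phi>: "classG \<phi>" and G\<psi>: "classG \<psi>" and t: "t \<in> {0<..1}" and \<delta>: "0 < \<delta>" "\<delta> \<le> 1"
    and ratio: "\<And>s. 0 < s \<Longrightarrow> s \<le> \<delta> \<Longrightarrow> \<psi> s / \<phi> s \<le> \<eta>"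
  shows "\<psi> t / t * (min t \<delta> / \<phi> (min t \<delta>)) \<le> 2 * \<eta>"
proof (cases "t \<le> \<delta>")
  case True
  have "0 < \<psi> t / \<phi> t" using G\<phi> G\<psi> t unfolding classG_def by simp
  then show ?thesis using ratio[of t] t True by simp
next
  case False
  have "0 < \<phi> \<delta>" using G\<phi> \<delta> unfolding classG_def by simp
  then have "\<psi> t / t * (\<delta> / \<phi> \<delta>) \<le> 2 * \<psi> \<delta> / \<delta> * (\<delta> / \<phi> \<delta>)"
    using classG_slope_le[OF G\<psi> \<delta>(1)] False t \<delta> by (intro mult_right_mono) auto
  also have "\<dots> = 2 * (\<psi> \<delta> / \<phi> \<delta>)" using \<delta> by simp
  also have "\<dots> \<le> 2 * \<eta>" using ratio[OF \<delta>(1) order_refl] by simp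
  finally show ?thesis using False by simp
qed

lemma marc_enorm_le_small_support:
  assumes ss: "symmetric_space S N"
    and fund: "\<forall>t\<in>{0<..1}. fundamental_function N t = \<phi> t"
    and G\<phi>: "classG \<phi>" and G\<psi>: "classG \<psi>"
    and xS: "x \<in> S" and \<delta>: "0 < \<delta>" "\<delta> \<le> 1" and supp: "distr_fun x 0 \<le> ennreal \<delta>"
    and ratio: "\<And>s. 0 < s \<Longrightarrow> s \<le> \<delta> \<Longrightarrow> \<psi> s / \<phi> s \<le> \<eta>"
  shows "marc_enorm (tilde \<psi>) x \<le> ennreal (2 * \<eta> * N x)"
  unfolding marc_enorm_def
proof (rule SUP_least)
  fix t :: real assume t: "t \<in> {0<..1}"
  define t' where "t' = min t \<delta>"
  have t': "t' \<in> {0<..1}" using t \<delta> by (auto simp: t'_def)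
  have \<phi>: "0 < \<phi> t'" "N (indicator {0<..<t'}) = \<phi> t'"
    using G\<phi> fund t' unfolding classG_def fundamental_function_def by auto
  have Nx: "0 \<le> N x" by (rule ss_norm_nonneg[OF ss xS])
  have "(\<integral>\<^sup>+ s\<in>{0<..<t}. ennreal (rearr x s) \<partial>lborel)
      \<le> (\<integral>\<^sup>+ s\<in>{0<..<t'}. ennreal (rearr x s) \<partial>lborel)"
    using nn_integral_rearr_le_support[OF supp, of t] \<delta> by (cases "t \<le> \<delta>") (simp_all add: t'_def)
  also have "\<dots> \<le> ennreal (t' * N x / \<phi> t')"
    using nn_integral_rearr_le[OF ss xS, of t'] t' \<phi> by auto
  finally have int: "(\<integral>\<^sup>+ s\<in>{0<..<t}. ennreal (rearr x s) \<partial>lborel) \<le> ennreal (t' * N x / \<phi> t')" .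
  have "ennreal (1 / tilde \<psi> t) * (\<integral>\<^sup>+ s\<in>{0<..<t}. ennreal (rearr x s) \<partial>lborel)
      \<le> ennreal (\<psi> t / t) * ennreal (t' * N x / \<phi> t')"
    using mult_left_mono[OF int, of "ennreal (\<psi> t / t)"] by (simp add: tilde_def)
  also have "\<dots> = ennreal ((\<psi> t / t * (t' / \<phi> t')) * N x)"
    using t t' Nx \<phi> by (simp add: ennreal_mult''[symmetric] mult.assoc)
  also have "\<dots> \<le> ennreal (2 * \<eta> * N x)"
    unfolding t'_def using classG_weight_le[OF G\<phi> G\<psi> t \<delta> ratio] Nx
    by (intro ennreal_leI mult_right_mono)
  finally show "ennreal (1 / tilde \<psi> t) * (\<integral>\<^sup>+ s\<in>{0<..<t}. ennreal (rearr x s) \<partial>lborel)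
      \<le> ennreal (2 * \<eta> * N x)" .
qed

lemma marc_norm_le:
  assumes "marc_enorm w x \<le> ennreal c" "0 \<le> c"
  shows "marc_norm w x \<le> c"
  using enn2real_mono[OF assms(1)] assms(2) unfolding marc_norm_def by simp

lemma symmetric_space_subset_marc_space:
  assumes ss: "symmetric_space S N"
    and fund: "\<forall>t\<in>{0<..1}. fundamental_function N t = \<phi> t"
    and G\<phi>: "classG \<phi>" and G\<psi>: "classG \<psi>"
    and lim: "((\<lambda>t. \<psi> t / \<phi> t) \<longlongrightarrow> 0) (at_right 0)"
  shows "S \<subseteq> marc_space (tilde \<psi>) \<and> (\<exists>C. \<forall>x\<in>S. marc_norm (tilde \<psi>) x \<le> C * N x)"
proof -
  obtain K where K: "\<And>s. s \<in> {0<..1} \<Longrightarrow> \<psi> s / \<phi> s \<le> K"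
    using classG_ratio_bounded[OF G\<phi> G\<psi> lim] by blast
  have "0 < \<psi> 1 / \<phi> 1" using G\<phi> G\<psi> unfolding classG_def by simp
  then have K0: "0 \<le> K" using K[of 1] by simp
  have bound: "marc_enorm (tilde \<psi>) x \<le> ennreal (2 * K * N x)" if "x \<in> S" for x
    by (rule marc_enorm_le_small_support[OF ss fund G\<phi> G\<psi> that, of 1])
      (auto simp: distr_fun_le_1 K)
  have "S \<subseteq> marc_space (tilde \<psi>)"
    using order_le_less_trans[OF bound ennreal_less_top] ss_measurable[OF ss]
    unfolding marc_space_def infinity_ennreal_def by blast
  moreover have "marc_norm (tilde \<psi>) x \<le> 2 * K * N x" if "x \<in> S" for x
    using marc_norm_le[OF bound[OF that]] K0 ss_norm_nonneg[OF ss that] by simp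
  ultimately show ?thesis by blast
qed

lemma inclusion_DSS_if_ratio_tendsto_0:
  assumes ss: "symmetric_space S N"
    and fund: "\<forall>t\<in>{0<..1}. fundamental_function N t = \<phi> t"
    and G\<phi>: "classG \<phi>" and G\<psi>: "classG \<psi>"
    and lim: "((\<lambda>t. \<psi> t / \<phi> t) \<longlongrightarrow> 0) (at_right 0)"
  shows "inclusion_DSS S N (tilde \<psi>)"
  unfolding inclusion_DSS_def
proof
  assume "\<exists>u c. (\<forall>n. u n \<in> S \<and> \<not> (AE t in mu01. u n t = 0)) \<and> pairwise_disjoint_seq u \<and>
      c > 0 \<and> (\<forall>x\<in>closed_span S N u. c * N x \<le> marc_norm (tilde \<psi>) x)"
  then obtain u c where uS: "\<And>n. u n \<in> S" and unz: "\<And>n. \<not> (AE t in mu01. u n t = 0)"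
    and dis: "pairwise_disjoint_seq u" and c: "c > 0"
    and iso: "\<forall>x\<in>closed_span S N u. c * N x \<le> marc_norm (tilde \<psi>) x" by metis
  obtain d where d: "0 < d" "d \<le> 1" "\<And>s. 0 < s \<Longrightarrow> s \<le> d \<Longrightarrow> \<psi> s / \<phi> s \<le> c / 4"
    using ratio_small_near_0[OF lim, of "c / 4"] c by auto
  obtain n where "distr_fun (u n) 0 < ennreal d"
    using pairwise_disjoint_seq_small_support[OF ss_measurable[OF ss uS] dis d(1)] by blast
  then have "marc_enorm (tilde \<psi>) (u n) \<le> ennreal (2 * (c / 4) * N (u n))"
    by (intro marc_enorm_le_small_support[OF ss fund G\<phi> G\<psi> uS d(1,2) _ d(3)]) auto
  then have "marc_norm (tilde \<psi>) (u n) \<le> 2 * (c / 4) * N (u n)"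
    by (rule marc_norm_le) (use c ss_norm_nonneg[OF ss uS] in simp)
  moreover have "c * N (u n) \<le> marc_norm (tilde \<psi>) (u n)"
    using iso generator_in_closed_span[where u=u, OF ss uS] by blast
  moreover have "0 < N (u n)"
    using ss_norm_nonneg[OF ss uS, of n] ss_norm_eq_0_iff[OF ss uS, of n] unz[of n] by linarith
  then have "2 * (c / 4) * N (u n) < c * N (u n)" using c by simp
  ultimately show False by linarith
qed

theorem theorem2:
  fixes \<phi> \<psi> :: "real \<Rightarrow> real"
    and S :: "(real \<Rightarrow> real) set" and N :: "(real \<Rightarrow> real) \<Rightarrow> real"
  assumes "classG \<phi>" and "classG \<psi>"
    and "((\<lambda>t. \<psi> t / \<phi> t) \<longlongrightarrow> 0) (at_right 0)"
    and "symmetric_space S N"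
    and "\<forall>t\<in>{0<..1}. fundamental_function N t = \<phi> t"
  shows "S \<subseteq> marc_space (tilde \<psi>)
    \<and> (\<exists>C. \<forall>x\<in>S. marc_norm (tilde \<psi>) x \<le> C * N x)
    \<and> inclusion_DSS S N (tilde \<psi>)"
  using symmetric_space_subset_marc_space[OF assms(4,5,1,2,3)]
    inclusion_DSS_if_ratio_tendsto_0[OF assms(4,5,1,2,3)]
  by blast

end
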